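(* Let $n,N$ be positive integers. For $f,\phi\in[0,1]$ let $a_{f,\phi}=e^{i2\pi\phi}\left[1,\ e^{i2\pi f},\ \ldots,\ e^{i2\pi(n-1)f}\right]^T\in\mathbb{C}^n$, and let $\mathcal{A}=\{a_{f,\phi}: f,\phi\in[0,1]\}$ and $\mathcal{A}_N=\{a_{m/N,\phi}: m=0,\ldots,N-1,\ \phi\in[0,1]\}$. Then for every $x\in\mathbb{C}^n$, $$\left(1-\frac{2\pi n}{N}\right)\|x\|_{\mathcal{A}_N}\le\|x\|_{\mathcal{A}}\le\|x\|_{\mathcal{A}_N}.$$
   Context: For a set $\mathcal{B}\subset\mathbb{C}^n$, the atomic norm is the gauge $\|x\|_{\mathcal{B}}=\inf\{t>0: x\in t\,\operatorname{conv}(\mathcal{B})\}$. *)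

theory Defs
  imports "HOL-Analysis.Analysis" "HOL-Library.Extended_Real"
begin

text \<open>Atomic norm (gauge of the convex hull of the atom set), valued in the
extended reals so that points outside the cone generated by the atoms get
norm \<open>\<infinity>\<close> (Inf of the empty set).\<close>
definition atomic_norm :: "'a::real_vector set \<Rightarrow> 'a \<Rightarrow> ereal" where
  "atomic_norm B x = Inf {ereal t | t. t > 0 \<and> x \<in> (\<lambda>y. t *\<^sub>R y) ` (convex hull B)}"

text \<open>Steering vector \<open>a_{f,\<phi>}\<close>; coordinate \<open>i\<close> carries exponent \<open>idx i\<close>,
where \<open>idx\<close> enumerates the coordinates as \<open>0..n-1\<close>.\<close>
definition steer :: "('n::finite \<Rightarrow> nat) \<Rightarrow> real \<Rightarrow> real \<Rightarrow> complex ^ 'n" where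
  "steer idx f \<phi> = (\<chi> i. cis (2 * pi * \<phi>) * cis (2 * pi * real (idx i) * f))"

definition atoms_cont :: "('n::finite \<Rightarrow> nat) \<Rightarrow> (complex ^ 'n) set" where
  "atoms_cont idx = {steer idx f \<phi> | f \<phi>. f \<in> {0..1} \<and> \<phi> \<in> {0..1}}"

definition atoms_grid :: "('n::finite \<Rightarrow> nat) \<Rightarrow> nat \<Rightarrow> (complex ^ 'n) set" where
  "atoms_grid idx N = {steer idx (real m / real N) \<phi> | m \<phi>. m < N \<and> \<phi> \<in> {0..1}}"

end

theory Submission
  imports Defs
begin

text \<open>
  Write \<open>r = 2\<pi>n/N\<close> and \<open>A\<close>, \<open>A\<^sub>N\<close> for the continuous and the gridded atom sets.
  The upper bound is monotonicity of the gauge, as \<open>A\<^sub>N \<subseteq> A\<close>. For the lower bound,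
  every atom \<open>a\<^sub>f\<^sub>,\<^sub>\<phi>\<close> is the product (coordinatewise) of a grid atom and of
  \<open>a\<^sub>\<delta>\<^sub>,\<^sub>0\<close> with \<open>|\<delta>| \<le> 1/(2N)\<close>. Since \<open>A\<close> is closed under coordinatewise
  products, \<open>\<parallel>xy\<parallel>\<^sub>A \<le> \<parallel>x\<parallel>\<^sub>A \<parallel>y\<parallel>\<^sub>A\<close>; the index vector \<open>(k)\<^sub>k\<close> has
  \<open>\<parallel>\<cdot>\<parallel>\<^sub>A \<le> n\<close> by an explicit expansion over the \<open>n\<close>-th roots of \<open>-1\<close>, so the exponential
  series gives \<open>\<parallel>a\<^sub>\<delta>\<^sub>,\<^sub>0 - 1\<parallel>\<^sub>A \<le> e\<^bsup>2\<pi>|\<delta>|n\<^esup> - 1 \<le> r\<close>. Hence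
  \<open>conv A \<subseteq> conv A\<^sub>N + r conv A\<close>, and iterating this inclusion together with compactness
  yields \<open>conv A \<subseteq> (1 - r)\<^sup>-\<^sup>1 conv A\<^sub>N\<close>.
\<close>

section \<open>Scaled convex hulls and atomic norms\<close>

definition scaled_hull :: "'a::real_vector set \<Rightarrow> real \<Rightarrow> 'a set" where
  "scaled_hull B s = (\<lambda>y. s *\<^sub>R y) ` (convex hull B)"

lemma scaled_hull_1 [simp]: "scaled_hull B 1 = convex hull B"
  unfolding scaled_hull_def by simp

lemma scaled_hull_scaleR: "y \<in> scaled_hull B s \<Longrightarrow> c *\<^sub>R y \<in> scaled_hull B (c * s)"
  unfolding scaled_hull_def by auto

lemma zero_in_scaled_hull:
  assumes "B \<noteq> {}"
  shows "0 \<in> scaled_hull B 0"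
proof -
  obtain b where "b \<in> B" using assms by blast
  then have "b \<in> convex hull B" by (rule hull_inc)
  then show ?thesis unfolding scaled_hull_def by (rule rev_image_eqI) simp
qed

lemma scaled_hull_add:
  assumes "0 \<le> s" "0 \<le> s'" "y \<in> scaled_hull B s" "z \<in> scaled_hull B s'"
  shows "y + z \<in> scaled_hull B (s + s')"
proof -
  obtain y' z' where y': "y' \<in> convex hull B" "y = s *\<^sub>R y'"
    and z': "z' \<in> convex hull B" "z = s' *\<^sub>R z'"
    using assms(3,4) unfolding scaled_hull_def by auto
  show ?thesis
  proof (cases "s + s' = 0")
    case True
    then have "s = 0" "s' = 0" using assms(1,2) by linarith+
    then have "y + z = (s + s') *\<^sub>R y'" using y'(2) z'(2) by simp
    then show ?thesis using y'(1) unfolding scaled_hull_def by blast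
  next
    case False
    then have pos: "s + s' > 0" using assms(1,2) by simp
    define w where "w = (s / (s + s')) *\<^sub>R y' + (s' / (s + s')) *\<^sub>R z'"
    have "w \<in> convex hull B" unfolding w_def
      by (rule convexD[OF convex_convex_hull y'(1) z'(1)])
        (use assms(1,2) pos in \<open>auto simp: add_divide_distrib[symmetric]\<close>)
    moreover have "y + z = (s + s') *\<^sub>R w"
      unfolding w_def y'(2) z'(2) using pos by (simp add: scaleR_add_right)
    ultimately show ?thesis unfolding scaled_hull_def by auto
  qed
qed

lemma scaled_hull_mono:
  assumes "0 \<in> convex hull B" "0 \<le> s" "s \<le> s'" "y \<in> scaled_hull B s"
  shows "y \<in> scaled_hull B s'"
proof -
  have "0 \<in> scaled_hull B (s' - s)"
    using assms(1) scaled_hull_scaleR[of 0 B 1 "s' - s"] by simp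
  then have "y + 0 \<in> scaled_hull B (s + (s' - s))"
    using assms(2-4) by (intro scaled_hull_add) auto
  then show ?thesis by simp
qed

lemma scaled_hull_sum:
  assumes "B \<noteq> {}" "finite I" "\<And>i. i \<in> I \<Longrightarrow> 0 \<le> s i"
    and "\<And>i. i \<in> I \<Longrightarrow> y i \<in> scaled_hull B (s i)"
  shows "(\<Sum>i\<in>I. y i) \<in> scaled_hull B (\<Sum>i\<in>I. s i)"
  using assms(2-)
proof (induction I rule: finite_induct)
  case empty
  then show ?case using zero_in_scaled_hull[OF assms(1)] by simp
next
  case (insert i I)
  then show ?case by (simp, intro scaled_hull_add) (auto intro: sum_nonneg)
qed

lemma convex_scaled_hull: "convex (scaled_hull B s)"
  unfolding scaled_hull_def by (intro convex_scaling convex_convex_hull)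

lemma compact_scaled_hull:
  fixes B :: "'a::euclidean_space set"
  shows "compact B \<Longrightarrow> compact (scaled_hull B s)"
  unfolding scaled_hull_def by (intro compact_scaling compact_convex_hull)

lemma atomic_norm_scaled_hull:
  "atomic_norm B x = Inf {ereal t | t. t > 0 \<and> x \<in> scaled_hull B t}"
  unfolding atomic_norm_def scaled_hull_def ..

lemma atomic_norm_nonneg: "0 \<le> atomic_norm B x"
  unfolding atomic_norm_def by (rule Inf_greatest) auto

lemma atomic_norm_antimono: "A \<subseteq> B \<Longrightarrow> atomic_norm B x \<le> atomic_norm A x"
  unfolding atomic_norm_scaled_hull scaled_hull_def
  by (rule Inf_superset_mono) (use hull_mono in blast)

lemma atomic_norm_le_if_hull_subset:
  assumes "c > 0" "convex hull A \<subseteq> scaled_hull B (1 / c)"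
  shows "ereal c * atomic_norm B x \<le> atomic_norm A x"
  unfolding atomic_norm_scaled_hull[of A]
proof (rule Inf_greatest)
  fix e assume "e \<in> {ereal t |t. 0 < t \<and> x \<in> scaled_hull A t}"
  then obtain t y where t: "e = ereal t" "0 < t" "y \<in> convex hull A" "x = t *\<^sub>R y"
    unfolding scaled_hull_def by blast
  have "x \<in> scaled_hull B (t / c)"
    using scaled_hull_scaleR[of y B "1 / c" t] assms(2) t(3,4) by auto
  then have "atomic_norm B x \<le> ereal (t / c)"
    unfolding atomic_norm_scaled_hull using assms(1) t(2) by (intro Inf_lower) auto
  then have "ereal c * atomic_norm B x \<le> ereal c * ereal (t / c)"
    by (rule ereal_mult_left_mono) (use assms(1) in simp)
  also have "\<dots> = e" using assms(1) t(1) by simp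
  finally show "ereal c * atomic_norm B x \<le> e" .
qed

lemma convex_hull_mult_closed:
  fixes A :: "'a::real_algebra set"
  assumes mult: "\<And>a b. a \<in> A \<Longrightarrow> b \<in> A \<Longrightarrow> a * b \<in> A"
    and "x \<in> convex hull A" "y \<in> convex hull A"
  shows "x * y \<in> convex hull A"
proof -
  have hull_preimage: "convex hull A \<subseteq> f -` (convex hull A)"
    if "linear f" "A \<subseteq> f -` (convex hull A)" for f :: "'a \<Rightarrow> 'a"
    using that by (intro hull_minimal convex_linear_vimage convex_convex_hull)
  have "a * y \<in> convex hull A" if "a \<in> A" for a
  proof -
    have "A \<subseteq> (*) a -` (convex hull A)"
      using mult[OF that] by (auto intro: hull_inc)
    moreover have "linear ((*) a)" by (rule linearI) (simp_all add: distrib_left)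
    ultimately show ?thesis using hull_preimage assms(3) by blast
  qed
  then have "A \<subseteq> (\<lambda>a. a * y) -` (convex hull A)" by blast
  moreover have "linear (\<lambda>a. a * y)" by (rule linearI) (simp_all add: distrib_right)
  ultimately show ?thesis using hull_preimage assms(2) by blast
qed

lemma scaled_hull_mult:
  fixes A :: "'a::real_algebra set"
  assumes "\<And>a b. a \<in> A \<Longrightarrow> b \<in> A \<Longrightarrow> a * b \<in> A"
    and "y \<in> scaled_hull A s" "z \<in> scaled_hull A t"
  shows "y * z \<in> scaled_hull A (s * t)"
proof -
  obtain y' z' where "y' \<in> convex hull A" "y = s *\<^sub>R y'" "z' \<in> convex hull A" "z = t *\<^sub>R z'"
    using assms(2,3) unfolding scaled_hull_def by auto
  then have "y * z = (s * t) *\<^sub>R (y' * z')" "y' * z' \<in> convex hull A"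
    using convex_hull_mult_closed[OF assms(1)] by (simp_all add: mult.commute)
  then show ?thesis unfolding scaled_hull_def by blast
qed

lemma scaled_hull_power:
  fixes A :: "'a::real_algebra_1 set"
  assumes "\<And>a b. a \<in> A \<Longrightarrow> b \<in> A \<Longrightarrow> a * b \<in> A" "1 \<in> A" "y \<in> scaled_hull A s"
  shows "y ^ j \<in> scaled_hull A (s ^ j)"
proof (induction j)
  case 0
  then show ?case using assms(2) hull_inc by fastforce
next
  case (Suc j)
  then show ?case using scaled_hull_mult[OF assms(1,3) Suc] by simp
qed

section \<open>Approximating one atom set by another\<close>

lemma convex_hull_approx:
  assumes approx: "\<And>a. a \<in> A \<Longrightarrow> \<exists>u\<in>B. a - u \<in> scaled_hull A r"
    and "y \<in> convex hull A"
  shows "\<exists>u\<in>convex hull B. y - u \<in> scaled_hull A r"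
proof -
  have "convex hull A \<subseteq> {y. \<exists>u\<in>convex hull B. y - u \<in> scaled_hull A r}"
  proof (rule hull_minimal)
    show "A \<subseteq> {y. \<exists>u\<in>convex hull B. y - u \<in> scaled_hull A r}"
    proof
      fix a assume "a \<in> A"
      then obtain u where "u \<in> B" "a - u \<in> scaled_hull A r" using approx by blast
      moreover from \<open>u \<in> B\<close> have "u \<in> convex hull B" by (rule hull_inc)
      ultimately show "a \<in> {y. \<exists>u\<in>convex hull B. y - u \<in> scaled_hull A r}" by blast
    qed
    show "convex {y. \<exists>u\<in>convex hull B. y - u \<in> scaled_hull A r}"
    proof (rule convexI)
      fix x y and \<mu> \<nu> :: real
      assume "x \<in> {y. \<exists>u\<in>convex hull B. y - u \<in> scaled_hull A r}"
        and "y \<in> {y. \<exists>u\<in>convex hull B. y - u \<in> scaled_hull A r}"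
        and \<mu>\<nu>: "0 \<le> \<mu>" "0 \<le> \<nu>" "\<mu> + \<nu> = 1"
      then obtain u v where u: "u \<in> convex hull B" "x - u \<in> scaled_hull A r"
        and v: "v \<in> convex hull B" "y - v \<in> scaled_hull A r"
        by blast
      have "\<mu> *\<^sub>R u + \<nu> *\<^sub>R v \<in> convex hull B"
        using u(1) v(1) \<mu>\<nu> by (rule convexD[OF convex_convex_hull])
      moreover have "\<mu> *\<^sub>R (x - u) + \<nu> *\<^sub>R (y - v) \<in> scaled_hull A r"
        using u(2) v(2) \<mu>\<nu> by (rule convexD[OF convex_scaled_hull])
      moreover have "\<mu> *\<^sub>R (x - u) + \<nu> *\<^sub>R (y - v) = (\<mu> *\<^sub>R x + \<nu> *\<^sub>R y) - (\<mu> *\<^sub>R u + \<nu> *\<^sub>R v)"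
        by (simp add: algebra_simps)
      ultimately show "\<mu> *\<^sub>R x + \<nu> *\<^sub>R y \<in> {y. \<exists>u\<in>convex hull B. y - u \<in> scaled_hull A r}"
        by (metis (mono_tags, lifting) mem_Collect_eq)
    qed
  qed
  then show ?thesis using assms(2) by blast
qed

lemma convex_hull_approx_iterate:
  assumes approx: "\<And>y. y \<in> convex hull A \<Longrightarrow> \<exists>u\<in>convex hull B. y - u \<in> scaled_hull A r"
    and "0 \<le> r" "y \<in> convex hull A"
  shows "\<exists>u\<in>scaled_hull B (\<Sum>j<K. r ^ j). y - u \<in> scaled_hull A (r ^ K)"
  using assms(3)
proof (induction K arbitrary: y)
  case 0
  have "B \<noteq> {}" using approx[OF 0] by auto
  then have "0 \<in> scaled_hull B (\<Sum>j<0. r ^ j)" using zero_in_scaled_hull by simp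
  moreover have "y - 0 \<in> scaled_hull A (r ^ 0)" using 0 by simp
  ultimately show ?case by blast
next
  case (Suc K)
  obtain u where u: "u \<in> scaled_hull B (\<Sum>j<K. r ^ j)" "y - u \<in> scaled_hull A (r ^ K)"
    using Suc by blast
  then obtain z where z: "z \<in> convex hull A" "y - u = r ^ K *\<^sub>R z"
    unfolding scaled_hull_def by blast
  obtain v where v: "v \<in> convex hull B" "z - v \<in> scaled_hull A r"
    using approx[OF z(1)] by blast
  have "u + r ^ K *\<^sub>R v \<in> scaled_hull B ((\<Sum>j<K. r ^ j) + r ^ K)"
    using scaled_hull_scaleR[of v B 1 "r ^ K"] v(1) u(1) assms(2)
    by (intro scaled_hull_add) (auto intro: sum_nonneg)
  moreover have "y - (u + r ^ K *\<^sub>R v) = r ^ K *\<^sub>R (z - v)"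
    using z(2) by (simp add: algebra_simps)
  moreover have "r ^ K *\<^sub>R (z - v) \<in> scaled_hull A (r ^ Suc K)"
    using scaled_hull_scaleR[OF v(2), of "r ^ K"] by (simp add: mult.commute)
  ultimately show ?case by (metis sum.lessThan_Suc)
qed

text \<open>
  Iterating \<open>conv A \<subseteq> conv B + r conv A\<close> gives \<open>conv A \<subseteq> (\<Sum>j<K. r\<^sup>j) conv B + r\<^sup>K conv A\<close>;
  the last term tends to \<open>0\<close> because \<open>conv A\<close> is bounded, and \<open>(1 - r)\<^sup>-\<^sup>1 conv B\<close> is closed.
\<close>

lemma convex_hull_subset_scaled_hull:
  fixes A B :: "'a::euclidean_space set"
  assumes "compact A" "compact B" "0 \<in> convex hull B" "0 \<le> r" "r < 1"
    and approx: "\<And>a. a \<in> A \<Longrightarrow> \<exists>u\<in>B. a - u \<in> scaled_hull A r"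
  shows "convex hull A \<subseteq> scaled_hull B (1 / (1 - r))"
proof
  fix y assume y: "y \<in> convex hull A"
  obtain M where M: "\<And>z. z \<in> convex hull A \<Longrightarrow> norm z \<le> M"
    using compact_imp_bounded[OF compact_convex_hull[OF assms(1)]] unfolding bounded_iff by blast
  have M0: "0 \<le> M" using M[OF y] norm_ge_zero order_trans by blast
  have "y \<in> closure (scaled_hull B (1 / (1 - r)))"
    unfolding closure_approachable
  proof (intro allI impI)
    fix \<epsilon> :: real assume "\<epsilon> > 0"
    then obtain K where K: "r ^ K < \<epsilon> / (M + 1)"
      using real_arch_pow_inv[of "\<epsilon> / (M + 1)" r] M0 assms(5) by auto
    obtain u where u: "u \<in> scaled_hull B (\<Sum>j<K. r ^ j)" "y - u \<in> scaled_hull A (r ^ K)"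
      using convex_hull_approx_iterate[OF convex_hull_approx[OF approx] assms(4) y] by blast
    obtain z where z: "z \<in> convex hull A" "y - u = r ^ K *\<^sub>R z"
      using u(2) unfolding scaled_hull_def by blast
    have "(\<Sum>j<K. r ^ j) = (1 - r ^ K) / (1 - r)"
      using sum_gp_strict[of r K] assms(5) by simp
    also have "\<dots> \<le> 1 / (1 - r)"
      using assms(4,5) by (intro divide_right_mono) auto
    finally have "u \<in> scaled_hull B (1 / (1 - r))"
      using scaled_hull_mono[OF assms(3) _ _ u(1)] assms(4) by (simp add: sum_nonneg)
    moreover have "dist u y \<le> r ^ K * M"
    proof -
      have "dist u y = r ^ K * norm z"
        using z(2) assms(4) by (simp add: dist_norm norm_minus_commute[of u])
      then show ?thesis using M[OF z(1)] assms(4) by (simp add: mult_left_mono)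
    qed
    moreover have "r ^ K * M < \<epsilon>"
    proof -
      have "r ^ K * M \<le> \<epsilon> / (M + 1) * M"
        using K M0 by (intro mult_right_mono) auto
      also have "\<dots> < \<epsilon>" using \<open>\<epsilon> > 0\<close> M0 by (simp add: field_simps)
      finally show ?thesis .
    qed
    ultimately show "\<exists>u\<in>scaled_hull B (1 / (1 - r)). dist u y < \<epsilon>" by (blast intro: le_less_trans)
  qed
  then show "y \<in> scaled_hull B (1 / (1 - r))"
    using compact_scaled_hull[OF assms(2)] by (simp add: compact_imp_closed closure_closed)
qed

section \<open>A kernel on the roots of \<open>-1\<close>\<close>

text \<open>
  The numbers \<open>\<omega>\<^sub>t = cis (root_angle n t)\<close>, \<open>t < n\<close>, are the \<open>n\<close>-th roots of \<open>-1\<close>, and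
  \<open>root_weight n t = 1 / |1 - \<omega>\<^sub>t|\<^sup>2\<close>.
\<close>

definition root_angle :: "nat \<Rightarrow> nat \<Rightarrow> real" where
  "root_angle n t = pi * (2 * real t + 1) / real n"

definition root_weight :: "nat \<Rightarrow> nat \<Rightarrow> real" where
  "root_weight n t = 1 / (2 - 2 * cos (root_angle n t))"

definition root_kernel :: "nat \<Rightarrow> nat \<Rightarrow> complex" where
  "root_kernel n k = (\<Sum>t<n. of_real (root_weight n t) * cis (root_angle n t * real k))"

lemma cis_odd_multiple_pi: "cis (pi * (2 * real t + 1)) = -1"
proof -
  have "cis (pi * (2 * real t + 1)) = cis (2 * pi * real t) * cis pi"
    unfolding cis_mult by (simp add: algebra_simps)
  then show ?thesis by simp
qed

lemma cis_root_angle_times_n: "n > 0 \<Longrightarrow> cis (root_angle n t * real n) = -1"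
  unfolding root_angle_def using cis_odd_multiple_pi[of t] by simp

lemma cos_root_angle_ne_1:
  assumes "n > 0"
  shows "cos (root_angle n t) \<noteq> 1"
proof
  assume "cos (root_angle n t) = 1"
  then obtain k :: int where "root_angle n t = real_of_int k * 2 * pi"
    using cos_one_2pi_int by blast
  then have "pi * (2 * real t + 1) = pi * (2 * real_of_int k * real n)"
    using assms by (simp add: root_angle_def field_simps)
  then have "real_of_int (2 * int t + 1) = real_of_int (2 * (k * int n))"
    by simp
  then have "2 * int t + 1 = 2 * (k * int n)" by (simp only: of_int_eq_iff)
  then show False by presburger
qed

lemma one_minus_cis_mult_one_minus_cis_minus:
  "(1 - cis x) * (1 - cis (- x)) = complex_of_real (2 - 2 * cos x)"
proof -
  have "(1 - cis x) * (1 - cis (- x)) = 1 - (cis x + cis (- x)) + cis x * cis (- x)"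
    by (simp add: algebra_simps)
  also have "\<dots> = complex_of_real (2 - 2 * cos x)"
    by (simp add: cis_mult complex_eq_iff)
  finally show ?thesis .
qed

lemma root_weight_pos:
  assumes "n > 0"
  shows "0 < root_weight n t"
proof -
  have "cos (root_angle n t) < 1"
    using cos_root_angle_ne_1[OF assms, of t] cos_le_one[of "root_angle n t"] by linarith
  then show ?thesis unfolding root_weight_def by simp
qed

lemma of_real_root_weight:
  "complex_of_real (root_weight n t)
     = 1 / ((1 - cis (root_angle n t)) * (1 - cis (- root_angle n t)))"
  unfolding one_minus_cis_mult_one_minus_cis_minus root_weight_def by simp

lemma sum_cis_root_angle_eq_0:
  fixes d :: int
  assumes "d \<noteq> 0" "\<bar>d\<bar> < int n"
  shows "(\<Sum>t<n. cis (root_angle n t * of_int d)) = 0"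
proof -
  have n: "n > 0" using assms by linarith
  define q where "q = cis (2 * pi * of_int d / n)"
  have geometric: "cis (root_angle n t * of_int d) = cis (pi * of_int d / n) * q ^ t" for t
  proof -
    have "cis (root_angle n t * of_int d) = cis (pi * of_int d / n + real t * (2 * pi * of_int d / n))"
      unfolding root_angle_def by (rule arg_cong[where f=cis]) (simp add: add_divide_distrib algebra_simps)
    also have "\<dots> = cis (pi * of_int d / n) * q ^ t"
      by (simp only: q_def Complex.DeMoivre cis_mult)
    finally show ?thesis .
  qed
  have "q ^ n = 1" unfolding q_def Complex.DeMoivre using n by simp
  moreover have "q \<noteq> 1"
  proof
    assume "q = 1"
    then have "cos (2 * pi * of_int d / n) = 1" unfolding q_def by (metis cis.sel(1) one_complex.sel(1))
    then obtain k :: int where "2 * pi * of_int d / n = real_of_int k * 2 * pi"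
      using cos_one_2pi_int by blast
    then have "real_of_int d = real_of_int (k * n)" using n by (simp add: field_simps)
    then have "d = k * n" by (simp only: of_int_eq_iff)
    then show False using assms by (cases "k = 0") (auto simp: abs_mult)
  qed
  ultimately show ?thesis
    unfolding geometric sum_distrib_left[symmetric] sum_gp_strict by simp
qed

lemma sum_cis_root_angle_diff:
  assumes "k < n" "m < n"
  shows "(\<Sum>t<n. cis (root_angle n t * (real k - real m))) = (if m = k then of_nat n else 0)"
proof (cases "m = k")
  case False
  have "real k - real m = of_int (int k - int m)" by simp
  then show ?thesis
    using False assms sum_cis_root_angle_eq_0[of "int k - int m" n] by simp
qed simp

lemma inverse_one_minus_cis_root_angle:
  assumes "n > 0"
  shows "1 / (1 - cis (- root_angle n t)) = (1 / 2) * (\<Sum>m<n. cis (- root_angle n t * real m))"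
proof -
  define q where "q = cis (- root_angle n t)"
  have "q ^ n = -1"
    using cis_root_angle_times_n[OF assms, of t] unfolding q_def Complex.DeMoivre
    by (metis cis_cnj complex_cnj_minus complex_cnj_one mult.commute mult_minus_left)
  moreover have "q \<noteq> 1"
    using cos_root_angle_ne_1[OF assms, of t] unfolding q_def by (auto simp: complex_eq_iff)
  moreover have "(\<Sum>m<n. cis (- root_angle n t * real m)) = (\<Sum>m<n. q ^ m)"
    unfolding q_def Complex.DeMoivre by (simp add: mult.commute)
  ultimately show ?thesis unfolding sum_gp_strict q_def by simp
qed

lemma root_kernel_Suc:
  assumes "k < n"
  shows "root_kernel n (Suc k) = root_kernel n k - of_nat n / 2"
proof -
  have n: "n > 0" using assms by simp
  have term_diff: "of_real (root_weight n t) * cis (root_angle n t * Suc k)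
      - of_real (root_weight n t) * cis (root_angle n t * k)
    = - (1 / 2) * (\<Sum>m<n. cis (root_angle n t * (real k - real m)))" for t
  proof -
    define \<theta> where "\<theta> = root_angle n t"
    have nonzero: "1 - cis \<theta> \<noteq> 0" "1 - cis (- \<theta>) \<noteq> 0"
      using cos_root_angle_ne_1[OF n, of t] unfolding \<theta>_def by (auto simp: complex_eq_iff)
    have "of_real (root_weight n t) * (cis \<theta> - 1)
        = 1 / ((1 - cis \<theta>) * (1 - cis (- \<theta>))) * (- (1 - cis \<theta>))"
      unfolding of_real_root_weight \<theta>_def by simp
    also have "\<dots> = - (1 / (1 - cis (- \<theta>)))"
      using nonzero by (simp add: divide_simps)
    finally have weight: "of_real (root_weight n t) * (cis \<theta> - 1) = - (1 / (1 - cis (- \<theta>)))" .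
    have "cis (\<theta> * Suc k) = cis (\<theta> * k) * cis \<theta>"
      unfolding cis_mult by (simp add: algebra_simps)
    then have "of_real (root_weight n t) * cis (\<theta> * Suc k)
        - of_real (root_weight n t) * cis (\<theta> * k)
      = cis (\<theta> * k) * (of_real (root_weight n t) * (cis \<theta> - 1))"
      by (simp add: algebra_simps)
    also have "\<dots> = - cis (\<theta> * k) * (1 / (1 - cis (- \<theta>)))"
      unfolding weight by simp
    also have "\<dots> = - (1 / 2) * (\<Sum>m<n. cis (\<theta> * k) * cis (- \<theta> * real m))"
      unfolding \<theta>_def inverse_one_minus_cis_root_angle[OF n] by (simp add: sum_distrib_left)
    also have "\<dots> = - (1 / 2) * (\<Sum>m<n. cis (\<theta> * (real k - real m)))"
      by (simp add: cis_mult algebra_simps)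
    finally show ?thesis unfolding \<theta>_def .
  qed
  have "root_kernel n (Suc k) - root_kernel n k
      = (\<Sum>t<n. - (1 / 2) * (\<Sum>m<n. cis (root_angle n t * (real k - real m))))"
    unfolding root_kernel_def sum_subtractf[symmetric] term_diff ..
  also have "\<dots> = - (1 / 2) * (\<Sum>m<n. \<Sum>t<n. cis (root_angle n t * (real k - real m)))"
    unfolding sum_distrib_left by (rule sum.swap)
  also have "\<dots> = - of_nat n / 2"
    using assms by (simp add: sum_cis_root_angle_diff)
  finally show ?thesis by (simp add: algebra_simps)
qed

text \<open>
  The kernel is affine in \<open>k\<close> with slope \<open>-n/2\<close>, and \<open>\<omega>\<^sub>t\<^sup>n = -1\<close> makes its value at \<open>n\<close>
  the negative of its value at \<open>0\<close>.
\<close>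

lemma root_kernel_eq:
  assumes "k \<le> n"
  shows "root_kernel n k = of_nat n ^ 2 / 4 - of_nat k * of_nat n / 2"
proof -
  have linear: "root_kernel n j = root_kernel n 0 - of_nat j * of_nat n / 2" if "j \<le> n" for j
    using that
  proof (induction j)
    case (Suc j)
    then have "root_kernel n (Suc j) = root_kernel n 0 - of_nat j * of_nat n / 2 - of_nat n / 2"
      by (simp add: root_kernel_Suc)
    then show ?case by (simp add: of_nat_Suc ring_distribs add_divide_distrib)
  qed simp
  have "root_kernel n n = - root_kernel n 0"
    unfolding root_kernel_def
    by (cases "n = 0") (simp_all add: cis_root_angle_times_n sum_negf)
  then have "root_kernel n 0 = of_nat n ^ 2 / 4"
    using linear[of n] by (simp add: power2_eq_square field_simps)
  then show ?thesis using linear[OF assms] by simp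
qed

lemma sum_root_weight: "(\<Sum>t<n. root_weight n t) = real n ^ 2 / 4"
proof -
  have "complex_of_real (\<Sum>t<n. root_weight n t) = root_kernel n 0"
    unfolding root_kernel_def by simp
  also have "\<dots> = complex_of_real (real n ^ 2 / 4)"
    by (simp add: root_kernel_eq)
  finally show ?thesis by (simp only: of_real_eq_iff)
qed

lemma steer_mult: "steer idx f \<phi> * steer idx f' \<phi>' = steer idx (f + f') (\<phi> + \<phi>')"
  unfolding steer_def by (simp add: vec_eq_iff cis_mult algebra_simps)

lemma steer_0_0: "steer idx 0 0 = 1"
  unfolding steer_def by (simp add: vec_eq_iff)

lemma steer_add_half: "steer idx f (\<phi> + 1 / 2) = - steer idx f \<phi>"
proof -
  have "cis (2 * pi * (\<phi> + 1 / 2)) = - cis (2 * pi * \<phi>)"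
    using cis_mult[of "2 * pi * \<phi>" pi] by (simp add: algebra_simps)
  then show ?thesis unfolding steer_def by (simp add: vec_eq_iff)
qed

lemma steer_add_of_int: "steer idx (f + of_int k) (\<phi> + of_int l) = steer idx f \<phi>"
proof -
  have periodic: "cis (x + 2 * pi * of_int j) = cis x" for x j
    by (simp add: cis_mult[symmetric])
  have "cis (2 * pi * (\<phi> + of_int l)) = cis (2 * pi * \<phi>)"
    using periodic[of "2 * pi * \<phi>" l] by (simp add: algebra_simps)
  moreover have "cis (2 * pi * real i * (f + of_int k)) = cis (2 * pi * real i * f)" for i
    using periodic[of "2 * pi * real i * f" "int i * k"] by (simp add: algebra_simps)
  ultimately show ?thesis unfolding steer_def by simp
qed

lemma steer_frac: "steer idx f \<phi> = steer idx (frac f) (frac \<phi>)"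
  using steer_add_of_int[of idx "frac f" "\<lfloor>f\<rfloor>" "frac \<phi>" "\<lfloor>\<phi>\<rfloor>"] by (simp add: frac_def)

lemma steer_in_atoms_cont: "steer idx f \<phi> \<in> atoms_cont idx"
proof -
  have "frac f \<in> {0..1}" "frac \<phi> \<in> {0..1}"
    using frac_ge_0 less_imp_le[OF frac_lt_1] by auto
  then show ?thesis unfolding atoms_cont_def steer_frac[of idx f \<phi>] by blast
qed

lemma atoms_cont_mult_closed:
  assumes "a \<in> atoms_cont idx" "b \<in> atoms_cont idx"
  shows "a * b \<in> atoms_cont idx"
proof -
  obtain f \<phi> f' \<phi>' where "a = steer idx f \<phi>" "b = steer idx f' \<phi>'"
    using assms unfolding atoms_cont_def by blast
  then show ?thesis by (simp add: steer_mult steer_in_atoms_cont)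
qed

lemma scaled_hull_atoms_cont_mult:
  "y \<in> scaled_hull (atoms_cont idx) s \<Longrightarrow> z \<in> scaled_hull (atoms_cont idx) t
    \<Longrightarrow> y * z \<in> scaled_hull (atoms_cont idx) (s * t)"
  by (rule scaled_hull_mult) (simp_all add: atoms_cont_mult_closed)

lemma scaled_hull_atoms_cont_power:
  "y \<in> scaled_hull (atoms_cont idx) s \<Longrightarrow> y ^ j \<in> scaled_hull (atoms_cont idx) (s ^ j)"
  using steer_in_atoms_cont[of idx 0 0] unfolding steer_0_0
  by (intro scaled_hull_power) (simp_all add: atoms_cont_mult_closed)

lemma atoms_grid_subset_atoms_cont: "atoms_grid idx N \<subseteq> atoms_cont idx"
  unfolding atoms_grid_def using steer_in_atoms_cont by blast

lemma zero_in_convex_hull_if_uminus: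
  assumes "a \<in> B" "- a \<in> B"
  shows "0 \<in> convex hull B"
proof -
  have "(1 / 2) *\<^sub>R a + (1 / 2) *\<^sub>R (- a) \<in> convex hull B"
    using assms by (intro convexD[OF convex_convex_hull] hull_inc) auto
  then show ?thesis by simp
qed

lemma zero_in_convex_hull_atoms_cont: "0 \<in> convex hull atoms_cont idx"
proof (rule zero_in_convex_hull_if_uminus)
  show "steer idx 0 0 \<in> atoms_cont idx" by (rule steer_in_atoms_cont)
  show "- steer idx 0 0 \<in> atoms_cont idx"
    using steer_in_atoms_cont[of idx 0 "0 + 1 / 2"] unfolding steer_add_half .
qed

lemma zero_in_convex_hull_atoms_grid:
  assumes "N > 0"
  shows "0 \<in> convex hull atoms_grid idx N"
proof (rule zero_in_convex_hull_if_uminus)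
  show "steer idx (real 0 / real N) 0 \<in> atoms_grid idx N"
    unfolding atoms_grid_def using assms by force
  have "- steer idx (real 0 / real N) 0 = steer idx (real 0 / real N) (1 / 2)"
    using steer_add_half[of idx _ 0] by simp
  then show "- steer idx (real 0 / real N) 0 \<in> atoms_grid idx N"
    unfolding atoms_grid_def using assms by force
qed

lemma compact_atoms_cont: "compact (atoms_cont idx)"
proof -
  have "atoms_cont idx = (\<lambda>p. steer idx (fst p) (snd p)) ` ({0..1} \<times> {0..1})"
    unfolding atoms_cont_def by force
  moreover have "continuous_on ({0..1} \<times> {0..1}) (\<lambda>p::real \<times> real. steer idx (fst p) (snd p))"
    unfolding steer_def by (intro continuous_on_vec_lambda continuous_intros)
  ultimately show ?thesis by (metis compact_Times compact_Icc compact_continuous_image)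
qed

lemma compact_atoms_grid: "compact (atoms_grid idx N)"
proof -
  have "atoms_grid idx N = (\<Union>m<N. steer idx (real m / real N) ` {0..1})"
    unfolding atoms_grid_def by force
  moreover have "compact (steer idx (real m / real N) ` {0..1})" for m
    by (intro compact_continuous_image compact_Icc)
      (unfold steer_def, intro continuous_on_vec_lambda continuous_intros)
  ultimately show ?thesis by auto
qed

lemma vec_in_scaled_hull_atoms_cont: "vec c \<in> scaled_hull (atoms_cont idx) (norm c)"
proof -
  have "c = norm c *\<^sub>R cis (Arg c)"
    using rcis_cmod_Arg[of c] by (simp add: rcis_def scaleR_conv_of_real)
  then have "vec c = norm c *\<^sub>R steer idx 0 (Arg c / (2 * pi))"
    by (simp add: steer_def vec_eq_iff)
  moreover have "steer idx 0 (Arg c / (2 * pi)) \<in> convex hull atoms_cont idx"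
    by (intro hull_inc steer_in_atoms_cont)
  ultimately show ?thesis unfolding scaled_hull_def by blast
qed

lemma steer_nearest_grid:
  assumes "N > 0"
  obtains m \<delta> where "m < N" "\<bar>\<delta>\<bar> \<le> 1 / (2 * real N)"
    "steer idx f \<phi> = steer idx (real m / real N) \<phi> * steer idx \<delta> 0"
proof -
  define k where "k = round (f * real N)"
  define m where "m = nat (k mod int N)"
  define \<delta> where "\<delta> = f - of_int k / real N"
  have "\<bar>\<delta>\<bar> = \<bar>f * real N - of_int k\<bar> / real N"
    unfolding \<delta>_def using assms by (simp add: field_simps abs_div_pos[symmetric])
  also have "\<dots> \<le> (1 / 2) / real N"
    using of_int_round_abs_le[of "f * real N"] unfolding k_def
    by (intro divide_right_mono) (simp_all add: abs_minus_commute)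
  finally have "\<bar>\<delta>\<bar> \<le> 1 / (2 * real N)" by simp
  moreover have "m < N" unfolding m_def using assms by (simp add: nat_less_iff)
  moreover have "f = (real m / real N + \<delta>) + of_int (k div int N)"
  proof -
    have "real m = of_int (k mod int N)"
      unfolding m_def using assms by simp
    moreover have "k = int N * (k div int N) + k mod int N"
      by (rule mult_div_mod_eq[symmetric])
    ultimately have "of_int k = real m + real N * of_int (k div int N)"
      by (metis add.commute of_int_add of_int_mult of_int_of_nat_eq)
    then show ?thesis unfolding \<delta>_def using assms by (simp add: field_simps)
  qed
  then have "steer idx f \<phi> = steer idx (real m / real N + \<delta>) (\<phi> + 0)"
    using steer_add_of_int[of idx "real m / real N + \<delta>" "k div int N" \<phi> 0] by simp
  ultimately show ?thesis using that by (simp add: steer_mult)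
qed

section \<open>The index vector and its exponentials\<close>

text \<open>
  By the kernel identity, \<open>k = n/2 - (2/n) \<Sum>\<^sub>t root_weight n t \<cdot> \<omega>\<^sub>t\<^sup>k\<close>: a combination
  of atoms with total weight \<open>n/2 + (2/n) \<Sum>\<^sub>t root_weight n t = n\<close>.
\<close>

lemma index_vector_in_scaled_hull:
  fixes idx :: "'n::finite \<Rightarrow> nat"
  assumes "\<And>i. idx i < n"
  shows "(\<chi> i. of_nat (idx i)) \<in> scaled_hull (atoms_cont idx) (real n)"
proof -
  let ?A = "atoms_cont idx"
  have n: "n > 0" using assms[of undefined] by simp
  define v where
    "v t = (2 / real n * root_weight n t) *\<^sub>R steer idx (root_angle n t / (2 * pi)) (1 / 2)" for t
  have v_nth: "v t $ i = - (2 / of_nat n) * (of_real (root_weight n t) * cis (root_angle n t * real (idx i)))"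
    for t i
    unfolding v_def vector_scaleR_component steer_def by (simp add: scaleR_conv_of_real algebra_simps)
  have "(\<chi> i. of_nat (idx i)) = vec (of_nat n / 2) + (\<Sum>t<n. v t)"
  proof -
    have "of_nat (idx i) = of_nat n / 2 - (2 / of_nat n) * root_kernel n (idx i)" for i
      using assms[of i] n by (simp add: root_kernel_eq power2_eq_square field_simps)
    then show ?thesis
      by (simp add: vec_eq_iff v_nth root_kernel_def sum_distrib_left sum_negf)
  qed
  moreover have "vec (of_nat n / 2) \<in> scaled_hull ?A (real n / 2)"
    using vec_in_scaled_hull_atoms_cont[of "of_nat n / 2" idx] by simp
  moreover have "(\<Sum>t<n. v t) \<in> scaled_hull ?A (real n / 2)"
  proof -
    have "v t \<in> scaled_hull ?A (2 / real n * root_weight n t)" for t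
    proof -
      have "steer idx (root_angle n t / (2 * pi)) (1 / 2) \<in> scaled_hull ?A 1"
        by (simp add: hull_inc steer_in_atoms_cont)
      then show ?thesis unfolding v_def using scaled_hull_scaleR by fastforce
    qed
    then have "(\<Sum>t<n. v t) \<in> scaled_hull ?A (\<Sum>t<n. 2 / real n * root_weight n t)"
      using root_weight_pos[OF n] steer_in_atoms_cont[of idx 0 0]
      by (intro scaled_hull_sum) (auto simp: less_imp_le)
    also have "(\<Sum>t<n. 2 / real n * root_weight n t) = 2 / real n * (\<Sum>t<n. root_weight n t)"
      by (rule sum_distrib_left[symmetric])
    also have "\<dots> = real n / 2"
      using n by (simp add: sum_root_weight power2_eq_square)
    finally show ?thesis .
  qed
  ultimately show ?thesis
    using scaled_hull_add[of "real n / 2" "real n / 2"] by fastforce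
qed

lemma exp_minus_one_sums:
  fixes z :: "'a::{real_normed_field, banach}"
  shows "(\<lambda>j. z ^ Suc j /\<^sub>R fact (Suc j)) sums (exp z - 1)"
  using exp_converges[of z] sums_Suc_iff[of "\<lambda>j. z ^ j /\<^sub>R fact j" "exp z - 1"] by simp

lemma cis_index_vector_minus_1:
  fixes idx :: "'n::finite \<Rightarrow> nat"
  assumes "\<And>i. idx i < n"
  shows "(\<chi> i. cis (\<theta> * real (idx i)) - 1) \<in> scaled_hull (atoms_cont idx) (exp (\<bar>\<theta>\<bar> * real n) - 1)"
proof -
  let ?A = "atoms_cont idx"
  define s where "s = \<bar>\<theta>\<bar> * real n"
  define X where "X = vec (\<i> * of_real \<theta>) * (\<chi> i. of_nat (idx i))"
  have X: "X \<in> scaled_hull ?A s"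
    using scaled_hull_atoms_cont_mult[OF vec_in_scaled_hull_atoms_cont[of "\<i> * of_real \<theta>"]
        index_vector_in_scaled_hull[of idx n, OF assms]]
    unfolding X_def s_def by (simp add: norm_mult)
  define P where "P J = (\<Sum>j<J. X ^ Suc j /\<^sub>R fact (Suc j))" for J
  have "P J \<in> scaled_hull ?A (exp s - 1)" for J
  proof -
    have s0: "0 \<le> s" unfolding s_def by simp
    have partial: "P J \<in> scaled_hull ?A (\<Sum>j<J. s ^ Suc j /\<^sub>R fact (Suc j))"
      unfolding P_def
    proof (rule scaled_hull_sum)
      fix j
      show "X ^ Suc j /\<^sub>R fact (Suc j) \<in> scaled_hull ?A (s ^ Suc j /\<^sub>R fact (Suc j))"
        using scaled_hull_scaleR[OF scaled_hull_atoms_cont_power[OF X, of "Suc j"], of "inverse (fact (Suc j))"]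
        by (simp only: real_scaleR_def)
      show "0 \<le> s ^ Suc j /\<^sub>R fact (Suc j)" unfolding s_def by simp
    qed (auto intro: steer_in_atoms_cont)
    have "(\<Sum>j<J. s ^ Suc j /\<^sub>R fact (Suc j)) \<le> exp s - 1"
      using sum_le_suminf[OF sums_summable[OF exp_minus_one_sums[of s]]] s0
        sums_unique[OF exp_minus_one_sums[of s]] by simp
    then show ?thesis
      using scaled_hull_mono[OF zero_in_convex_hull_atoms_cont _ _ partial] s0 by (simp add: sum_nonneg)
  qed
  moreover have "P \<longlonglongrightarrow> (\<chi> i. cis (\<theta> * real (idx i)) - 1)"
  proof (rule vec_tendstoI)
    fix i
    have power_nth: "(X ^ j) $ i = (X $ i) ^ j" for j by (induction j) simp_all
    have "X $ i = \<i> * of_real (\<theta> * real (idx i))" unfolding X_def by simp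
    then have "(\<lambda>J. P J $ i) = (\<lambda>J. \<Sum>j<J. (\<i> * of_real (\<theta> * real (idx i))) ^ Suc j /\<^sub>R fact (Suc j))"
      unfolding P_def by (simp add: power_nth)
    moreover have "exp (\<i> * of_real (\<theta> * real (idx i))) = cis (\<theta> * real (idx i))"
      by (simp add: cis_conv_exp)
    ultimately show "(\<lambda>J. P J $ i) \<longlonglongrightarrow> (\<chi> i. cis (\<theta> * real (idx i)) - 1) $ i"
      using exp_minus_one_sums[of "\<i> * of_real (\<theta> * real (idx i))"] by (simp add: sums_def)
  qed
  ultimately show ?thesis unfolding s_def[symmetric]
    using closed_sequentially[OF compact_imp_closed[OF compact_scaled_hull[OF compact_atoms_cont]]]
    by blast
qed

lemma atom_near_grid:
  fixes idx :: "'n::finite \<Rightarrow> nat"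
  assumes idx: "\<And>i. idx i < n" and "N > 0" and small: "2 * pi * real n / real N \<le> 1"
    and "a \<in> atoms_cont idx"
  shows "\<exists>u\<in>atoms_grid idx N. a - u \<in> scaled_hull (atoms_cont idx) (2 * pi * real n / real N)"
proof -
  let ?A = "atoms_cont idx"
  obtain f \<phi> where "\<phi> \<in> {0..1}" and a: "a = steer idx f \<phi>"
    using assms(4) unfolding atoms_cont_def by blast
  obtain m \<delta> where "m < N" and \<delta>: "\<bar>\<delta>\<bar> \<le> 1 / (2 * real N)"
    and split: "steer idx f \<phi> = steer idx (real m / real N) \<phi> * steer idx \<delta> 0"
    using steer_nearest_grid[OF \<open>N > 0\<close>] by blast
  define u where "u = steer idx (real m / real N) \<phi>"
  have "u \<in> atoms_grid idx N"
    unfolding u_def atoms_grid_def using \<open>m < N\<close> \<open>\<phi> \<in> {0..1}\<close> by blast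
  define x where "x = \<bar>2 * pi * \<delta>\<bar> * real n"
  have "steer idx \<delta> 0 - 1 = (\<chi> i. cis (2 * pi * \<delta> * real (idx i)) - 1)"
    unfolding steer_def by (simp add: vec_eq_iff mult.commute mult.left_commute)
  then have "steer idx \<delta> 0 - 1 \<in> scaled_hull ?A (exp x - 1)"
    unfolding x_def using cis_index_vector_minus_1[of idx n, OF idx] by simp
  moreover have "u \<in> scaled_hull ?A 1"
    unfolding u_def by (simp add: hull_inc steer_in_atoms_cont)
  ultimately have "u * (steer idx \<delta> 0 - 1) \<in> scaled_hull ?A (1 * (exp x - 1))"
    by (intro scaled_hull_atoms_cont_mult)
  moreover have "a - u = u * (steer idx \<delta> 0 - 1)"
    unfolding a split u_def[symmetric] by (simp add: right_diff_distrib)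
  ultimately have "a - u \<in> scaled_hull ?A (exp x - 1)" by simp
  moreover have "exp x - 1 \<le> 2 * pi * real n / real N"
  proof -
    have "\<bar>2 * pi * \<delta>\<bar> \<le> pi / real N"
      using mult_left_mono[OF \<delta>, of "2 * pi"] by (simp add: abs_mult)
    then have x: "x \<le> pi * real n / real N"
      unfolding x_def using mult_right_mono[of _ _ "real n"] by fastforce
    then have "x \<le> 1" using small by linarith
    moreover have "0 \<le> x" unfolding x_def by simp
    ultimately have "exp x \<le> 1 + x + x\<^sup>2" by (rule exp_bound[rotated])
    moreover have "x\<^sup>2 \<le> x"
      using \<open>0 \<le> x\<close> \<open>x \<le> 1\<close> by (simp add: power2_eq_square mult_left_le)
    ultimately show ?thesis using x by simp
  qed
  moreover have "0 \<le> exp x - 1" unfolding x_def by simp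
  ultimately have "a - u \<in> scaled_hull ?A (2 * pi * real n / real N)"
    using scaled_hull_mono[OF zero_in_convex_hull_atoms_cont] by blast
  then show ?thesis using \<open>u \<in> atoms_grid idx N\<close> by blast
qed

theorem mainTheorem9:
  fixes idx :: "'n::finite \<Rightarrow> nat" and N :: nat and x :: "complex ^ 'n"
  assumes "bij_betw idx UNIV {..<CARD('n)}"
    and "N > 0"
  shows "ereal (1 - 2 * pi * real CARD('n) / real N) * atomic_norm (atoms_grid idx N) x
           \<le> atomic_norm (atoms_cont idx) x
       \<and> atomic_norm (atoms_cont idx) x \<le> atomic_norm (atoms_grid idx N) x"
proof
  let ?r = "2 * pi * real CARD('n) / real N"
  have idx: "\<And>i. idx i < CARD('n)" using assms(1) by (auto simp: bij_betw_def)
  show "atomic_norm (atoms_cont idx) x \<le> atomic_norm (atoms_grid idx N) x"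
    by (rule atomic_norm_antimono[OF atoms_grid_subset_atoms_cont])
  show "ereal (1 - ?r) * atomic_norm (atoms_grid idx N) x \<le> atomic_norm (atoms_cont idx) x"
  proof (cases "?r < 1")
    case True
    have "convex hull atoms_cont idx \<subseteq> scaled_hull (atoms_grid idx N) (1 / (1 - ?r))"
      using atom_near_grid[of idx, OF idx assms(2)] True
      by (intro convex_hull_subset_scaled_hull compact_atoms_cont compact_atoms_grid
          zero_in_convex_hull_atoms_grid assms(2)) auto
    then show ?thesis using True by (intro atomic_norm_le_if_hull_subset) auto
  next
    case False
    then have "ereal (1 - ?r) \<le> 0" by simp
    then have "ereal (1 - ?r) * atomic_norm (atoms_grid idx N) x \<le> 0"
      unfolding ereal_mult_le_0_iff using atomic_norm_nonneg by blast
    also have "0 \<le> atomic_norm (atoms_cont idx) x" by (rule atomic_norm_nonneg)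
    finally show ?thesis .
  qed
qed

end
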